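(* For any index $\mathbf{k}$, the element $w_{\hbar}^{\mathcal{S}, \ast}(g_{\mathbf{k}})$ belongs to the $\mathbb{Z}$-submodule $\bigoplus_{\mathbf{l} \in I_{0}}\mathbb{Z}\,g_{\mathbf{l}}$ of $\mathcal C\langle A\rangle$, where $I_0$ is the set of admissible indices.
   Context: Indices: an index is a finite (possibly empty) tuple $\mathbf k=(k_1,\dots,k_r)$ of positive integers; admissible if empty or $k_r\ge2$. Let $\mathcal{C}=\mathbb{Q}[\hbar]$ ($\hbar$ formal), $\mathfrak{H}=\mathcal{C}\langle a,b\rangle$. For $k\ge1$, $g_k=ba^k$; $g_{\mathbf k}=g_{k_1}\cdots g_{k_r}$, $g_\varnothing=1$. $A=\{\hbar b\}\cup\{ba^k\mid k\ge1\}$, $\mathcal{C}\langle A\rangle$ the $\mathcal{C}$-subalgebra generated by $1$ and $A$, $\mathfrak z$ the $\mathcal C$-span of $A$. Harmonic product: $\circ_\hbar$ symmetric $\mathcal C$-bilinear on $\mathfrak z$ with $(\hbar b)\circ_\hbar(\hbar b)=\hbar\cdot\hbar b$, $(\hbar b)\circ_\hbar g_k=\hbar g_k$, $g_k\circ_\hbar g_l=g_{k+l}$; $\ast_\hbar$ on $\mathcal{C}\langle A\rangle$: $w\ast_\hbar1=1\ast_\hbar w=w$, $(wu)\ast_\hbar(w'v)=(w\ast_\hbar w'v)u+(wu\ast_\hbar w')v+(w\ast_\hbar w')(u\circ_\hbar v)$ ($u,v\in A$). $\psi^\ast$ is the $\mathcal C$-algebra anti-involution of $\mathcal C\langle A\rangle$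 with $\psi^\ast(\hbar b)=\hbar b$, $\psi^\ast(ba^k)=b(-a)^k$ ($k\ge1$). $w^{\mathcal S,\ast}_\hbar$ is the $\mathcal C$-linear map with $w^{\mathcal S,\ast}_\hbar(1)=1$, $w^{\mathcal S,\ast}_\hbar(u_1\cdots u_r)=\sum_{i=0}^r(u_1\cdots u_i)\ast_\hbar\psi^\ast(u_{i+1}\cdots u_r)$ for $u_j\in A$. *)

theory Defs
  imports "HOL-Computational_Algebra.Polynomial"
begin

text \<open>Letters of the alphabet A: HB stands for hbar*b, G k for g_k = b a^k (k >= 1).
  Elements of C<A> (C = Q[hbar]) are C-linear combinations of words over A,
  represented as coefficient functions  word => rat poly  (the polynomial variable is hbar).\<close>

datatype letter = HB | G nat

type_synonym elt = "letter list \<Rightarrow> rat poly"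

definition hbar :: "rat poly" where "hbar = [:0, 1:]"

definition delta :: "letter list \<Rightarrow> elt" where
  "delta v = (\<lambda>w. if w = v then 1 else 0)"

definition rmul :: "elt \<Rightarrow> rat poly \<Rightarrow> letter \<Rightarrow> elt" where
  "rmul f c x = (\<lambda>w. if w \<noteq> [] \<and> last w = x then c * f (butlast w) else 0)"

fun circ :: "letter \<Rightarrow> letter \<Rightarrow> rat poly \<times> letter" where
  "circ HB HB = (hbar, HB)"
| "circ HB (G k) = (hbar, G k)"
| "circ (G k) HB = (hbar, G k)"
| "circ (G k) (G l) = (1, G (k + l))"

text \<open>Harmonic product of two words (extended bilinearly, this is the product on C<A>).\<close>
function hstar :: "letter list \<Rightarrow> letter list \<Rightarrow> elt" where
  "hstar u v = (if u = [] then delta v else if v = [] then delta u else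
     (\<lambda>w. rmul (hstar (butlast u) v) 1 (last u) w
        + rmul (hstar u (butlast v)) 1 (last v) w
        + rmul (hstar (butlast u) (butlast v)) (fst (circ (last u) (last v)))
               (snd (circ (last u) (last v))) w))"
  by pat_completeness auto
termination
  by (relation "measure (\<lambda>(u, v). length u + length v)") (auto, metis length_greater_0_conv add_less_le_mono diff_less le_eq_less_or_eq less_Suc0 diff_le_self)

text \<open>psi^*: anti-involution, psi(HB) = HB, psi(b a^k) = b (-a)^k = (-1)^k g_k.
  On a word v it gives  psi_sign v * (rev v).\<close>
fun lsign :: "letter \<Rightarrow> rat poly" where
  "lsign HB = 1"
| "lsign (G k) = (-1) ^ k"

definition psi_sign :: "letter list \<Rightarrow> rat poly" where
  "psi_sign v = prod_list (map lsign v)"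

definition psi_word :: "letter list \<Rightarrow> elt" where
  "psi_word v = (\<lambda>w. if w = rev v then psi_sign v else 0)"

text \<open>w^{S,*}_hbar on a word u_1...u_r:
  sum_{i=0}^r (u_1...u_i) * psi^*(u_{i+1}...u_r), using bilinearity of *.\<close>
definition wS :: "letter list \<Rightarrow> elt" where
  "wS u = (\<lambda>w. \<Sum>i\<le>length u. psi_sign (drop i u) * hstar (take i u) (rev (drop i u)) w)"

definition g :: "nat list \<Rightarrow> letter list" where
  "g ks = map G ks"

definition is_index :: "nat list \<Rightarrow> bool" where
  "is_index ks \<longleftrightarrow> (\<forall>k\<in>set ks. k \<ge> 1)"

definition admissible :: "nat list \<Rightarrow> bool" where
  "admissible ks \<longleftrightarrow> is_index ks \<and> (ks = [] \<or> last ks \<ge> 2)"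

definition in_Z_span_adm :: "elt \<Rightarrow> bool" where
  "in_Z_span_adm f \<longleftrightarrow> finite {w. f w \<noteq> 0}
     \<and> (\<forall>w. f w \<noteq> 0 \<longrightarrow> (\<exists>ls. admissible ls \<and> w = g ls))
     \<and> (\<forall>w. \<exists>n::int. f w = of_int n)"

end

theory Submission
  imports Defs
begin

text \<open>The word g_k = g_(k_1) ... g_(k_r) consists of letters g_k with k \<ge> 1, and on such
  letters the harmonic product g_k \<circ> g_l = g_(k+l) never produces g_1. Hence a word ending
  in g_1 occurs in a harmonic product u * v only through the last letter of u or of v. In
  w^(S,*)(u_1 ... u_r) = \<Sigma>_i (u_1 ... u_i) * \<psi>^*(u_(i+1) ... u_r), a letter u_i = g_1 is the
  last letter of the left factor in the i-th summand and, with the sign \<psi>^*(g_1) = -g_1,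
  the last letter of the right factor in the (i-1)-st summand; so the coefficients of all
  words ending in g_1 telescope to zero. Integrality is clear, since the only scalars
  occurring are 1 and \<plusminus>1.\<close>

declare hstar.simps [simp del]

definition index_letters :: "letter set" where
  "index_letters = G ` {1..}"

lemma G_in_index_letters_iff [simp]: "G k \<in> index_letters \<longleftrightarrow> k \<ge> 1"
  by (auto simp: index_letters_def)

lemma set_g_subset_index_letters_iff: "set (g ks) \<subseteq> index_letters \<longleftrightarrow> is_index ks"
  by (auto simp: g_def is_index_def)

lemma circ_index_letters:
  assumes "x \<in> index_letters" "y \<in> index_letters"
  shows "\<exists>k\<ge>2. circ x y = (1, G k)"
  using assms by (auto simp: index_letters_def)

lemma admissible_if_not_last_G1:
  assumes "set w \<subseteq> index_letters" and "w = [] \<or> last w \<noteq> G 1"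
  shows "\<exists>ls. admissible ls \<and> w = g ls"
proof -
  define ls where "ls = map (\<lambda>x. case x of G k \<Rightarrow> k | HB \<Rightarrow> 0) w"
  have w_eq: "w = g ls"
    using assms(1) unfolding ls_def g_def by (induction w) (auto simp: index_letters_def)
  then have "is_index ls"
    using assms(1) set_g_subset_index_letters_iff by simp
  moreover have "last ls \<ge> 2" if "ls \<noteq> []"
  proof -
    have "last ls \<ge> 1"
      using \<open>is_index ls\<close> that by (simp add: is_index_def)
    moreover have "last w = G (last ls)" "w \<noteq> []"
      using w_eq that by (simp_all add: g_def last_map)
    then have "last ls \<noteq> 1"
      using assms(2) by auto
    ultimately show ?thesis
      by simp
  qed
  ultimately show ?thesis
    using w_eq unfolding admissible_def by blast
qed

definition int_combination :: "letter set \<Rightarrow> elt \<Rightarrow> bool" where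
  "int_combination L f \<longleftrightarrow>
     finite {w. f w \<noteq> 0} \<and> (\<forall>w. f w \<noteq> 0 \<longrightarrow> set w \<subseteq> L) \<and> (\<forall>w. f w \<in> \<int>)"

lemma int_combination_delta: "set v \<subseteq> L \<Longrightarrow> int_combination L (delta v)"
  by (simp add: int_combination_def delta_def)

lemma int_combination_rmul:
  assumes f: "int_combination L f" and "c \<in> \<int>" "x \<in> L"
  shows "int_combination L (rmul f c x)"
proof -
  have supp: "{w. rmul f c x w \<noteq> 0} \<subseteq> (\<lambda>w. w @ [x]) ` {w. f w \<noteq> 0}"
    unfolding rmul_def by (auto simp: image_iff intro!: exI[of _ "butlast _"])
  have "set w \<subseteq> L" if nonzero: "rmul f c x w \<noteq> 0" for w
  proof -
    obtain w' where "w = w' @ [x]" "f w' \<noteq> 0"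
      using supp nonzero by blast
    then show ?thesis
      using f \<open>x \<in> L\<close> by (auto simp: int_combination_def)
  qed
  then show ?thesis
    using f \<open>c \<in> \<int>\<close> finite_subset[OF supp] by (auto simp: int_combination_def rmul_def)
qed

lemma int_combination_sum:
  assumes "finite I" and "\<And>i. i \<in> I \<Longrightarrow> c i \<in> \<int> \<and> int_combination L (f i)"
  shows "int_combination L (\<lambda>w. \<Sum>i\<in>I. c i * f i w)"
proof -
  have supp: "{w. (\<Sum>i\<in>I. c i * f i w) \<noteq> 0} \<subseteq> (\<Union>i\<in>I. {w. f i w \<noteq> 0})"
    by (auto intro: ccontr dest: sum.neutral)
  have "set w \<subseteq> L" if "(\<Sum>i\<in>I. c i * f i w) \<noteq> 0" for w
    using supp that assms(2) by (force simp: int_combination_def)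
  then show ?thesis
    using assms finite_subset[OF supp]
    by (auto simp: int_combination_def intro: Ints_sum Ints_mult)
qed

lemma int_combination_add:
  assumes "int_combination L f" "int_combination L h"
  shows "int_combination L (\<lambda>w. f w + h w)"
  using int_combination_sum[of "{True, False}" "\<lambda>_. 1" L "\<lambda>i. if i then f else h"] assms
  by simp

lemma hstar_Nil_left: "hstar [] v = delta v"
  by (simp add: hstar.simps)

lemma hstar_Nil_right: "hstar u [] = delta u"
  by (simp add: hstar.simps)

lemma hstar_nonempty:
  assumes "u \<noteq> []" "v \<noteq> []"
  shows "hstar u v w =
      rmul (hstar (butlast u) v) 1 (last u) w
    + rmul (hstar u (butlast v)) 1 (last v) w
    + rmul (hstar (butlast u) (butlast v)) (fst (circ (last u) (last v)))
        (snd (circ (last u) (last v))) w"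
  using assms by (simp add: hstar.simps)

lemma int_combination_hstar:
  assumes "\<And>x y. x \<in> L \<Longrightarrow> y \<in> L \<Longrightarrow> fst (circ x y) \<in> \<int> \<and> snd (circ x y) \<in> L"
  shows "set u \<subseteq> L \<Longrightarrow> set v \<subseteq> L \<Longrightarrow> int_combination L (hstar u v)"
proof (induction u v rule: hstar.induct)
  case (1 u v)
  show ?case
  proof (cases "u = [] \<or> v = []")
    case True
    then show ?thesis
      using "1.prems" by (auto simp: hstar_Nil_left hstar_Nil_right intro: int_combination_delta)
  next
    case False
    then have nonempty: "u \<noteq> []" "v \<noteq> []"
      by auto
    have letters: "set (butlast u) \<subseteq> L" "set (butlast v) \<subseteq> L" "last u \<in> L" "last v \<in> L"
      using False "1.prems" by (auto dest: in_set_butlastD)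
    have "int_combination L (hstar (butlast u) v)"
      "int_combination L (hstar u (butlast v))"
      "int_combination L (hstar (butlast u) (butlast v))"
      using "1.IH" False letters "1.prems" by auto
    with False letters assms show ?thesis
      unfolding hstar_nonempty[OF nonempty]
      by (intro int_combination_add int_combination_rmul) auto
  qed
qed

lemma psi_sign_in_Ints: "psi_sign v \<in> \<int>"
proof -
  have "lsign x \<in> \<int>" for x
    by (cases x) auto
  then show ?thesis
    unfolding psi_sign_def by (induction v) auto
qed

lemma int_combination_wS:
  assumes "\<And>x y. x \<in> L \<Longrightarrow> y \<in> L \<Longrightarrow> fst (circ x y) \<in> \<int> \<and> snd (circ x y) \<in> L"
    and "set u \<subseteq> L"
  shows "int_combination L (wS u)"
  unfolding wS_def
proof (intro int_combination_sum conjI)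
  fix i
  show "int_combination L (hstar (take i u) (rev (drop i u)))"
    using assms(2) set_take_subset[of i u] set_drop_subset[of i u]
    by (intro int_combination_hstar[OF assms(1)]) auto
qed (simp_all add: psi_sign_in_Ints)

lemma rmul_snoc: "rmul f c x (w @ [y]) = (if x = y then c * f w else 0)"
  by (simp add: rmul_def)

lemma delta_snoc:
  "delta v (w @ [y]) = (if v \<noteq> [] \<and> last v = y then delta (butlast v) w else 0)"
  by (cases v rule: rev_cases) (auto simp: delta_def)

lemma hstar_snoc_G1:
  assumes "set u \<subseteq> index_letters" "set v \<subseteq> index_letters"
  shows "hstar u v (w @ [G 1]) =
      (if u \<noteq> [] \<and> last u = G 1 then hstar (butlast u) v w else 0)
    + (if v \<noteq> [] \<and> last v = G 1 then hstar u (butlast v) w else 0)"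
proof (cases "u = [] \<or> v = []")
  case True
  then show ?thesis
    by (auto simp: hstar_Nil_left hstar_Nil_right delta_snoc)
next
  case False
  then have "last u \<in> index_letters" "last v \<in> index_letters"
    using assms by auto
  then obtain k where "k \<ge> 2" "circ (last u) (last v) = (1, G k)"
    using circ_index_letters by blast
  with False show ?thesis
    by (simp add: hstar_nonempty rmul_snoc)
qed

lemma wS_snoc_G1:
  assumes u: "set u \<subseteq> index_letters"
  shows "wS u (w @ [G 1]) = 0"
proof -
  let ?n = "length u"
  \<comment> \<open>F j: the contribution of a letter u_j = g_1 (counted from 1) in the (j-1)-st summand;
    it reappears with the opposite sign in the j-th summand.\<close>
  define F where "F j = (if 0 < j \<and> j \<le> ?n \<and> u ! (j - 1) = G 1
      then psi_sign (drop (j - 1) u) * hstar (take (j - 1) u) (rev (drop j u)) w else 0)" for j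
  have summand: "psi_sign (drop i u) * hstar (take i u) (rev (drop i u)) (w @ [G 1])
      = F (Suc i) - F i" if "i \<le> ?n" for i
  proof -
    have "set (take i u) \<subseteq> index_letters" "set (rev (drop i u)) \<subseteq> index_letters"
      using u by (auto dest: in_set_takeD in_set_dropD)
    note expand = hstar_snoc_G1[OF this, of w]
    have left: "psi_sign (drop i u) *
        (if take i u \<noteq> [] \<and> last (take i u) = G 1
         then hstar (butlast (take i u)) (rev (drop i u)) w else 0) = - F i"
    proof (cases i)
      case (Suc j)
      with that have "drop j u = u ! j # drop i u" "take i u = take j u @ [u ! j]"
        by (simp_all add: Cons_nth_drop_Suc take_Suc_conv_app_nth)
      with Suc that show ?thesis
        by (simp add: F_def psi_sign_def)
    qed (simp add: F_def)
    have right: "psi_sign (drop i u) *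
        (if rev (drop i u) \<noteq> [] \<and> last (rev (drop i u)) = G 1
         then hstar (take i u) (butlast (rev (drop i u))) w else 0) = F (Suc i)"
    proof (cases "i < ?n")
      case True
      then have "drop i u = u ! i # drop (Suc i) u"
        by (simp add: Cons_nth_drop_Suc)
      with True show ?thesis
        by (simp add: F_def)
    qed (use that in \<open>simp add: F_def\<close>)
    show ?thesis
      unfolding expand distrib_left left right by simp
  qed
  have "wS u (w @ [G 1]) = (\<Sum>i<Suc ?n. F (Suc i) - F i)"
    unfolding wS_def lessThan_Suc_atMost using summand by (intro sum.cong) auto
  also have "\<dots> = F (Suc ?n) - F 0"
    by (rule sum_lessThan_telescope)
  also have "\<dots> = 0"
    by (simp add: F_def)
  finally show ?thesis .
qed

lemma in_Z_span_adm_if_no_last_G1: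
  assumes "int_combination index_letters f" and "\<And>w. f (w @ [G 1]) = 0"
  shows "in_Z_span_adm f"
  unfolding in_Z_span_adm_def
proof (intro conjI allI impI)
  show "finite {w. f w \<noteq> 0}"
    using assms(1) by (simp add: int_combination_def)
  show "\<exists>ls. admissible ls \<and> w = g ls" if "f w \<noteq> 0" for w
  proof (rule admissible_if_not_last_G1)
    show "set w \<subseteq> index_letters"
      using assms(1) that by (auto simp: int_combination_def)
    show "w = [] \<or> last w \<noteq> G 1"
      using assms(2)[of "butlast w"] that by (metis append_butlast_last_id)
  qed
  show "\<exists>n::int. f w = of_int n" for w
    using assms(1) by (auto simp: int_combination_def elim!: Ints_cases)
qed

theorem proposition5p1:
  fixes ks :: "nat list"
  assumes "is_index ks"
  shows "in_Z_span_adm (wS (g ks))"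
proof (rule in_Z_span_adm_if_no_last_G1)
  have u: "set (g ks) \<subseteq> index_letters"
    using assms by (simp add: set_g_subset_index_letters_iff)
  have "fst (circ x y) \<in> \<int> \<and> snd (circ x y) \<in> index_letters"
    if "x \<in> index_letters" "y \<in> index_letters" for x y
    using circ_index_letters[OF that] by auto
  then show "int_combination index_letters (wS (g ks))"
    using int_combination_wS u by blast
  show "wS (g ks) (w @ [G 1]) = 0" for w
    using wS_snoc_G1[OF u] .
qed

end
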